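(* Let $m\ge 2$, let $e_k(\mathbf{y})$ be the $k$-th elementary symmetric function of $\mathbf{y}=\{y_1,\dots,y_m\}$, and let $Z(\mathbf{y})=\sum_{k=0}^m a_ke_k(\mathbf{y})$ with $a_0,\dots,a_m$ nonnegative reals, not all zero. The following are equivalent: (a) $Z$ satisfies the Rayleigh condition; (b) the sequence $(a_k:0\le k\le m)$ is logarithmically concave with no internal zeros; (c) $\Delta Z\{1,2\}$, a symmetric polynomial in $y_3,\dots,y_m$, is a positive linear combination of Schur functions; (d) $\Delta Z\{1,2\}$ is a positive linear combination of monomial symmetric functions.
   Context: For a multiaffine polynomial $Z$ in $y_1,\dots,y_m$, $Z_i=\partial Z/\partial y_i$, $Z_{ij}=\partial^2Z/\partial y_i\partial y_j$, $\Delta Z\{i,j\}=Z_iZ_j-Z_{ij}Z$. $Z$ satisfies the Rayleigh condition if $\Delta Z\{i,j\}(\mathbf{y})\ge0$ for all $i\ne j$ and all $\mathbf{y}$ with all $y_c>0$. A nonnegative sequence $(a_k)$ is logarithmically concave if $a_k^2\ge a_{k-1}a_{k+1}$ for all interior $k$, and has no internal zeros if $i<j<k$ and $a_ia_k\neq0$ imply $a_j\ne0$. *)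

theory Defs
  imports "HOL-Analysis.Analysis"
begin

text \<open>Points y = (y_1,...,y_m) are functions nat => real; only indices 1..m matter.\<close>

definition esym :: "nat \<Rightarrow> nat \<Rightarrow> (nat \<Rightarrow> real) \<Rightarrow> real" where
  "esym m k y = (\<Sum>S\<in>{S. S \<subseteq> {1..m} \<and> card S = k}. \<Prod>i\<in>S. y i)"

definition Zpoly :: "nat \<Rightarrow> (nat \<Rightarrow> real) \<Rightarrow> (nat \<Rightarrow> real) \<Rightarrow> real" where
  "Zpoly m a y = (\<Sum>k=0..m. a k * esym m k y)"

definition pd :: "nat \<Rightarrow> ((nat \<Rightarrow> real) \<Rightarrow> real) \<Rightarrow> (nat \<Rightarrow> real) \<Rightarrow> real" where
  "pd i f y = deriv (\<lambda>t. f (y(i := t))) (y i)"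

definition DeltaZ :: "((nat \<Rightarrow> real) \<Rightarrow> real) \<Rightarrow> nat \<Rightarrow> nat \<Rightarrow> (nat \<Rightarrow> real) \<Rightarrow> real" where
  "DeltaZ f i j y = pd i f y * pd j f y - pd j (pd i f) y * f y"

definition rayleigh :: "nat \<Rightarrow> ((nat \<Rightarrow> real) \<Rightarrow> real) \<Rightarrow> bool" where
  "rayleigh m f \<longleftrightarrow> (\<forall>i\<in>{1..m}. \<forall>j\<in>{1..m}. i \<noteq> j \<longrightarrow>
      (\<forall>y. (\<forall>c\<in>{1..m}. y c > 0) \<longrightarrow> DeltaZ f i j y \<ge> 0))"

definition log_concave :: "nat \<Rightarrow> (nat \<Rightarrow> real) \<Rightarrow> bool" where
  "log_concave m a \<longleftrightarrow> (\<forall>k. 0 < k \<and> k < m \<longrightarrow> a (k - 1) * a (k + 1) \<le> (a k)\<^sup>2)"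

definition no_internal_zeros :: "nat \<Rightarrow> (nat \<Rightarrow> real) \<Rightarrow> bool" where
  "no_internal_zeros m a \<longleftrightarrow>
     (\<forall>i j k. i < j \<and> j < k \<and> k \<le> m \<and> a i * a k \<noteq> 0 \<longrightarrow> a j \<noteq> 0)"

definition is_partition :: "nat list \<Rightarrow> bool" where
  "is_partition lam \<longleftrightarrow> sorted (rev lam) \<and> 0 \<notin> set lam"

definition monomial_sym :: "nat list \<Rightarrow> nat set \<Rightarrow> (nat \<Rightarrow> real) \<Rightarrow> real" where
  "monomial_sym lam V y =
     (\<Sum>alpha\<in>{alpha :: nat \<Rightarrow> nat. (\<forall>i. i \<notin> V \<longrightarrow> alpha i = 0) \<and>
          image_mset alpha (mset_set V) = mset lam + replicate_mset (card V - length lam) 0}.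
        \<Prod>i\<in>V. y i ^ alpha i)"

text \<open>Cells of the Young diagram of lambda (row r, column c, 0-based).\<close>
definition young_cells :: "nat list \<Rightarrow> (nat \<times> nat) set" where
  "young_cells lam = {(r, c). r < length lam \<and> c < lam ! r}"

definition ssyt :: "nat list \<Rightarrow> nat set \<Rightarrow> (nat \<times> nat \<Rightarrow> nat) set" where
  "ssyt lam V = {T. (\<forall>x. x \<notin> young_cells lam \<longrightarrow> T x = 0) \<and>
      (\<forall>x\<in>young_cells lam. T x \<in> V) \<and>
      (\<forall>r c. (r, c + 1) \<in> young_cells lam \<longrightarrow> T (r, c) \<le> T (r, c + 1)) \<and>
      (\<forall>r c. (r + 1, c) \<in> young_cells lam \<longrightarrow> T (r, c) < T (r + 1, c))}"

definition schur :: "nat list \<Rightarrow> nat set \<Rightarrow> (nat \<Rightarrow> real) \<Rightarrow> real" where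
  "schur lam V y = (\<Sum>T\<in>ssyt lam V. \<Prod>x\<in>young_cells lam. y (T x))"

definition pos_comb :: "(nat list \<Rightarrow> (nat \<Rightarrow> real) \<Rightarrow> real) \<Rightarrow> ((nat \<Rightarrow> real) \<Rightarrow> real) \<Rightarrow> bool" where
  "pos_comb b g \<longleftrightarrow> (\<exists>S c. finite S \<and> (\<forall>lam\<in>S. is_partition lam \<and> c lam > (0::real)) \<and>
      (\<forall>y. g y = (\<Sum>lam\<in>S. c lam * b lam y)))"

end

(* Write Z_on a V y = sum over I <= V of a_|I| y^I, so that Zpoly m a = Z_on a {1..m}. Pulling out
   y_i and y_j gives Delta Z{i,j} = Delta_on a W := Z_on a' W ^ 2 - Z_on a W * Z_on a'' W with
   W = {1..m} - {i,j} and a', a'' the shifted sequences; by symmetry the Rayleigh condition says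
   Delta_on a W >= 0 on the positive orthant for one W with m - 2 elements.

   Setting one variable of W to t > 0 makes Delta_on a quadratic in t whose constant and leading
   coefficients are Delta_on a and Delta_on a' on the smaller set, so nonnegativity descends to
   every shift of a on every smaller set: on the empty set it is log-concavity, and on a set whose
   size matches a run of zeros evaluating at y = 1 excludes internal zeros.

   Conversely, expanding the square gives Delta_on a W = sum over I, J <= W of
   lc_minor a |I| |J| y^I y^J with lc_minor a i j = a_(i+1) a_(j+1) - a_i a_(j+2), which is
   nonnegative for i <= j when a is log-concave without internal zeros. Exchanging the parts of I
   and J above the first point where I has more elements than J is a weight-preserving involution
   that reverses the sign of lc_minor, so only pairs with I dominated by J survive. These are the
   columns of the semistandard tableaux of the two-column shape 2^|I| 1^(|J|-|I|), which gives a
   Schur expansion with coefficients lc_minor a |I| |J|. Grouping the pairs instead by I /\ J and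
   I \/ J gives the monomial expansion; its coefficients are sums of lc_minor over one such group,
   and the same cancellation shows that they are nonnegative. Schur and monomial functions are
   nonnegative at positive arguments, so either expansion gives back Delta_on a W >= 0. *)

theory Submission
  imports Defs
begin

definition Z_on :: "(nat \<Rightarrow> real) \<Rightarrow> nat set \<Rightarrow> (nat \<Rightarrow> real) \<Rightarrow> real" where
  "Z_on a V y = (\<Sum>I\<in>Pow V. a (card I) * (\<Prod>i\<in>I. y i))"

abbreviation shift :: "(nat \<Rightarrow> real) \<Rightarrow> nat \<Rightarrow> real" where
  "shift a \<equiv> \<lambda>k. a (Suc k)"

definition Delta_on :: "(nat \<Rightarrow> real) \<Rightarrow> nat set \<Rightarrow> (nat \<Rightarrow> real) \<Rightarrow> real" where
  "Delta_on a V y = (Z_on (shift a) V y)\<^sup>2 - Z_on a V y * Z_on (shift (shift a)) V y"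

definition Delta_nonneg :: "(nat \<Rightarrow> real) \<Rightarrow> nat set \<Rightarrow> bool" where
  "Delta_nonneg a V \<longleftrightarrow> (\<forall>y. (\<forall>c\<in>V. 0 < y c) \<longrightarrow> 0 \<le> Delta_on a V y)"

lemma Z_on_empty [simp]: "Z_on a {} y = a 0"
  unfolding Z_on_def by simp

lemma Z_on_insert:
  assumes "finite V" "x \<notin> V"
  shows "Z_on a (insert x V) y = Z_on a V y + y x * Z_on (shift a) V y"
proof -
  have disj: "Pow V \<inter> insert x ` Pow V = {}" using assms by auto
  have inj: "inj_on (insert x) (Pow V)"
    using assms(2) by (intro inj_onI) (metis Pow_iff insert_ident subset_iff)
  have "Z_on a (insert x V) y = Z_on a V y + (\<Sum>I\<in>insert x ` Pow V. a (card I) * (\<Prod>i\<in>I. y i))"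
    unfolding Z_on_def Pow_insert using assms disj by (simp add: sum.union_disjoint)
  also have "(\<Sum>I\<in>insert x ` Pow V. a (card I) * (\<Prod>i\<in>I. y i))
      = (\<Sum>I\<in>Pow V. y x * (a (Suc (card I)) * (\<Prod>i\<in>I. y i)))"
    unfolding sum.reindex[OF inj] comp_def
  proof (rule sum.cong[OF refl])
    fix I assume "I \<in> Pow V"
    then have "finite I" "x \<notin> I" using assms finite_subset by auto
    then show "a (card (insert x I)) * (\<Prod>i\<in>insert x I. y i)
        = y x * (a (Suc (card I)) * (\<Prod>i\<in>I. y i))"
      by simp
  qed
  finally show ?thesis unfolding Z_on_def by (simp add: sum_distrib_left)
qed

lemma Z_on_cong:
  assumes "\<And>i. i \<in> V \<Longrightarrow> y i = z i"
  shows "Z_on a V y = Z_on a V z"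
  unfolding Z_on_def using assms by (intro sum.cong refl arg_cong[where f = "(*) _"] prod.cong) auto

lemma Z_on_fun_upd_other [simp]: "x \<notin> V \<Longrightarrow> Z_on a V (y(x := t)) = Z_on a V y"
  by (rule Z_on_cong) auto

lemma Delta_on_cong:
  assumes "\<And>i. i \<in> V \<Longrightarrow> y i = z i"
  shows "Delta_on a V y = Delta_on a V z"
  unfolding Delta_on_def using Z_on_cong[OF assms] by simp

lemma Z_on_reindex:
  assumes "inj_on h U"
  shows "Z_on a (h ` U) y = Z_on a U (y \<circ> h)"
proof -
  have "Pow (h ` U) = image h ` Pow U"
    by (rule subset_antisym, clarsimp, metis Int_lower1 Pow_iff image_eqI subset_image_iff) auto
  then have "Z_on a (h ` U) y = (\<Sum>I\<in>Pow U. a (card (h ` I)) * (\<Prod>i\<in>h ` I. y i))"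
    unfolding Z_on_def using inj_on_image_Pow[OF assms] by (simp add: sum.reindex)
  also have "\<dots> = Z_on a U (y \<circ> h)"
    unfolding Z_on_def
  proof (rule sum.cong[OF refl])
    fix I assume "I \<in> Pow U"
    then have "inj_on h I" using assms inj_on_subset by blast
    then show "a (card (h ` I)) * (\<Prod>i\<in>h ` I. y i) = a (card I) * prod (y \<circ> h) I"
      by (simp add: card_image prod.reindex)
  qed
  finally show ?thesis .
qed

lemma Delta_nonneg_card_invariant:
  assumes "finite V" "finite W" "card V = card W" "Delta_nonneg a V"
  shows "Delta_nonneg a W"
  unfolding Delta_nonneg_def
proof (intro allI impI)
  fix y :: "nat \<Rightarrow> real" assume y: "\<forall>c\<in>W. 0 < y c"
  obtain h where h: "bij_betw h V W" using finite_same_card_bij assms(1-3) by blast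
  then have "Delta_on a W y = Delta_on a V (y \<circ> h)"
    unfolding Delta_on_def bij_betw_def using Z_on_reindex by metis
  moreover have "\<forall>c\<in>V. 0 < (y \<circ> h) c" using h y by (auto simp: bij_betw_def)
  ultimately show "0 \<le> Delta_on a W y" using assms(4) unfolding Delta_nonneg_def by simp
qed

lemma pd_affine:
  assumes "\<And>z. f z = base z + z i * slope z"
    and "\<And>z t. base (z(i := t)) = base z" and "\<And>z t. slope (z(i := t)) = slope z"
  shows "pd i f y = slope y"
proof -
  have "(\<lambda>t. f (y(i := t))) = (\<lambda>t. base y + t * slope y)"
    using assms by (simp add: fun_eq_iff)
  moreover have "((\<lambda>t. base y + t * slope y) has_real_derivative slope y) (at (y i))"
    by (auto intro!: derivative_eq_intros)
  ultimately show ?thesis unfolding pd_def by (simp add: DERIV_imp_deriv)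
qed

lemma Zpoly_eq_Z_on: "Zpoly m a y = Z_on a {1..m} y"
proof -
  have "Z_on a {1..m} y
      = (\<Sum>k\<in>{0..m}. \<Sum>I\<in>{I. I \<in> Pow {1..m} \<and> card I = k}. a (card I) * (\<Prod>i\<in>I. y i))"
    unfolding Z_on_def
    by (rule sum.group[symmetric]) (auto simp: card_mono[of "{1..m}", simplified])
  also have "\<dots> = Zpoly m a y"
    unfolding Zpoly_def esym_def
    by (intro sum.cong refl) (auto simp: sum_distrib_left intro!: sum.cong)
  finally show ?thesis by simp
qed

lemma DeltaZ_eq_Delta_on:
  assumes "i \<in> {1..m}" "j \<in> {1..m}" "i \<noteq> j"
  shows "DeltaZ (Zpoly m a) i j y = Delta_on a ({1..m} - {i, j}) y"
proof -
  define W where "W = {1..m} - {i, j}"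
  have W: "finite W" "i \<notin> W" "j \<notin> W" unfolding W_def by auto
  define A where "A = Z_on a W"
  define B where "B = Z_on (shift a) W"
  define C where "C = Z_on (shift (shift a)) W"
  have "{1..m} = insert i (insert j W)"
    using assms unfolding W_def by auto
  then have Z: "Zpoly m a z = A z + z i * B z + z j * B z + z i * z j * C z" for z
    unfolding Zpoly_eq_Z_on A_def B_def C_def using W assms
    by (simp add: Z_on_insert algebra_simps)
  have upd: "A (z(i := t)) = A z" "B (z(i := t)) = B z" "C (z(i := t)) = C z"
    "A (z(j := t)) = A z" "B (z(j := t)) = B z" "C (z(j := t)) = C z" for z t
    using W unfolding A_def B_def C_def by auto
  have pd_i: "pd i (Zpoly m a) = (\<lambda>z. B z + z j * C z)"
    by (rule ext, rule pd_affine[where base = "\<lambda>z. A z + z j * B z"])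
       (use assms(3) in \<open>simp_all only: Z upd fun_upd_other algebra_simps\<close>)
  have pd_j: "pd j (Zpoly m a) z = B z + z i * C z" for z
    by (rule pd_affine[where base = "\<lambda>z. A z + z i * B z"])
       (use not_sym[OF assms(3)] in \<open>simp_all only: Z upd fun_upd_other algebra_simps\<close>)
  have pd_ji: "pd j (pd i (Zpoly m a)) z = C z" for z
    unfolding pd_i by (rule pd_affine[where base = B]) (simp_all only: upd)
  have "DeltaZ (Zpoly m a) i j y = (B y + y j * C y) * (B y + y i * C y) - C y * Zpoly m a y"
    unfolding DeltaZ_def pd_ji by (simp add: pd_i pd_j)
  also have "\<dots> = (B y)\<^sup>2 - A y * C y"
    unfolding Z by (simp add: power2_eq_square algebra_simps)
  finally show ?thesis
    unfolding Delta_on_def A_def B_def C_def W_def .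
qed

lemma DeltaZ_12_eq_Delta_on:
  assumes "m \<ge> 2"
  shows "DeltaZ (Zpoly m a) 1 2 = Delta_on a {3..m}"
proof
  fix y
  have "{1..m} - {1, 2} = {3..m}" by auto
  then show "DeltaZ (Zpoly m a) 1 2 y = Delta_on a {3..m} y"
    using DeltaZ_eq_Delta_on[of 1 m 2] assms by simp
qed

lemma rayleigh_iff_Delta_nonneg:
  assumes "m \<ge> 2"
  shows "rayleigh m (Zpoly m a) \<longleftrightarrow> Delta_nonneg a {3..m}"
proof
  assume ray: "rayleigh m (Zpoly m a)"
  show "Delta_nonneg a {3..m}"
    unfolding Delta_nonneg_def
  proof (intro allI impI)
    fix y :: "nat \<Rightarrow> real" assume y: "\<forall>c\<in>{3..m}. 0 < y c"
    define y' where "y' = y(1 := 1, 2 := 1)"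
    have "\<forall>c\<in>{1..m}. 0 < y' c" unfolding y'_def using y by auto
    then have "0 \<le> DeltaZ (Zpoly m a) 1 2 y'" using ray assms unfolding rayleigh_def by auto
    also have "\<dots> = Delta_on a {3..m} y"
      unfolding DeltaZ_12_eq_Delta_on[OF assms] by (rule Delta_on_cong) (auto simp: y'_def)
    finally show "0 \<le> Delta_on a {3..m} y" .
  qed
next
  assume nonneg: "Delta_nonneg a {3..m}"
  show "rayleigh m (Zpoly m a)"
    unfolding rayleigh_def
  proof (intro ballI impI allI)
    fix i j :: nat and y :: "nat \<Rightarrow> real"
    assume ij: "i \<in> {1..m}" "j \<in> {1..m}" "i \<noteq> j" and y: "\<forall>c\<in>{1..m}. 0 < y c"
    have "card ({1..m} - {i, j}) = card {3..m}" using ij by (simp add: card_Diff_subset)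
    then have "Delta_nonneg a ({1..m} - {i, j})"
      using Delta_nonneg_card_invariant[OF _ _ _ nonneg] by simp
    then show "0 \<le> DeltaZ (Zpoly m a) i j y"
      unfolding DeltaZ_eq_Delta_on[OF ij] Delta_nonneg_def using y by simp
  qed
qed

lemma nonneg_quadratic_on_pos_coeffs:
  fixes p0 p1 p2 :: real
  assumes "\<And>t. t > 0 \<Longrightarrow> 0 \<le> p0 + p1 * t + p2 * t\<^sup>2"
  shows "0 \<le> p0" and "0 \<le> p2"
proof -
  have const_nonneg: "0 \<le> q0" if q: "\<And>t. t > 0 \<Longrightarrow> 0 \<le> q0 + q1 * t + q2 * t\<^sup>2" for q0 q1 q2 :: real
  proof (rule tendsto_lowerbound)
    show "((\<lambda>t. q0 + q1 * t + q2 * t\<^sup>2) \<longlongrightarrow> q0) (at_right 0)"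
      by (auto intro!: tendsto_eq_intros)
    show "\<forall>\<^sub>F t in at_right 0. 0 \<le> q0 + q1 * t + q2 * t\<^sup>2"
      using eventually_at_right_less[of 0] by eventually_elim (use q in auto)
  qed simp
  show "0 \<le> p0" using assms by (rule const_nonneg)
  show "0 \<le> p2"
  proof (rule const_nonneg)
    fix s :: real assume s: "s > 0"
    have "0 \<le> (p0 + p1 * (1/s) + p2 * (1/s)\<^sup>2) * s\<^sup>2" using assms[of "1/s"] s by simp
    also have "\<dots> = p2 + p1 * s + p0 * s\<^sup>2" using s by (simp add: field_simps power2_eq_square)
    finally show "0 \<le> p2 + p1 * s + p0 * s\<^sup>2" .
  qed
qed

lemma Delta_nonneg_remove:
  assumes "finite V" "x \<notin> V" "Delta_nonneg a (insert x V)"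
  shows "Delta_nonneg a V" "Delta_nonneg (shift a) V"
proof -
  have "0 \<le> Delta_on a V y \<and> 0 \<le> Delta_on (shift a) V y" if y: "\<forall>c\<in>V. 0 < y c" for y
  proof -
    define q0 where "q0 = Z_on a V y"
    define q1 where "q1 = Z_on (shift a) V y"
    define q2 where "q2 = Z_on (shift (shift a)) V y"
    define q3 where "q3 = Z_on (shift (shift (shift a))) V y"
    have "0 \<le> (q1\<^sup>2 - q0 * q2) + (q1 * q2 - q0 * q3) * t + (q2\<^sup>2 - q1 * q3) * t\<^sup>2"
      if t: "t > 0" for t
    proof -
      have "\<forall>c\<in>insert x V. 0 < (y(x := t)) c" using y t assms(2) by auto
      then have "0 \<le> Delta_on a (insert x V) (y(x := t))"
        using assms(3) unfolding Delta_nonneg_def by blast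
      also have "\<dots> = (q1 + t * q2)\<^sup>2 - (q0 + t * q1) * (q2 + t * q3)"
        unfolding Delta_on_def q0_def q1_def q2_def q3_def
        using assms(1,2) by (simp add: Z_on_insert)
      also have "\<dots> = (q1\<^sup>2 - q0 * q2) + (q1 * q2 - q0 * q3) * t + (q2\<^sup>2 - q1 * q3) * t\<^sup>2"
        by (simp add: power2_eq_square algebra_simps)
      finally show ?thesis .
    qed
    from nonneg_quadratic_on_pos_coeffs[OF this] show ?thesis
      unfolding Delta_on_def q0_def q1_def q2_def q3_def by simp
  qed
  then show "Delta_nonneg a V" "Delta_nonneg (shift a) V"
    unfolding Delta_nonneg_def by blast+
qed

lemma Delta_nonneg_shift_subset:
  assumes "finite V" "Delta_nonneg a V" "p + r \<le> card V"
  shows "\<exists>V'. finite V' \<and> card V' = r \<and> Delta_nonneg (\<lambda>k. a (k + p)) V'"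
  using assms
proof (induction "card V" arbitrary: V a p)
  case 0
  then show ?case by (intro exI[of _ V]) simp
next
  case (Suc n)
  obtain x W where W: "V = insert x W" "x \<notin> W" "finite W" "card W = n"
    using card_Suc_eq_finite[THEN iffD1, OF Suc.hyps(2)[symmetric]] by blast
  have nonneg_W: "Delta_nonneg a W" "Delta_nonneg (shift a) W"
    using Delta_nonneg_remove[OF W(3,2)] Suc.prems W(1) by auto
  consider "p + r \<le> n" | "p = 0" "r = card V" | p' where "p = Suc p'" "p' + r \<le> n"
    using Suc.hyps(2) Suc.prems(3) by (cases p; cases "r \<le> n") auto
  then show ?case
  proof cases
    case 1
    then show ?thesis using Suc.hyps(1)[OF W(4)[symmetric] W(3) nonneg_W(1)] W(4) by blast
  next
    case 2
    then show ?thesis using Suc by (intro exI[of _ V]) simp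
  next
    case 3
    then show ?thesis using Suc.hyps(1)[OF W(4)[symmetric] W(3) nonneg_W(2), of p'] W(4) by simp
  qed
qed
lemma Delta_nonneg_empty_iff: "Delta_nonneg b {} \<longleftrightarrow> b 0 * b 2 \<le> (b 1)\<^sup>2"
  unfolding Delta_nonneg_def Delta_on_def by (simp add: numeral_2_eq_2)

lemma Delta_nonneg_imp_log_concave:
  assumes "finite V" "card V + 2 = m" "Delta_nonneg a V"
  shows "log_concave m a"
  unfolding log_concave_def
proof (intro allI impI)
  fix k assume k: "0 < k \<and> k < m"
  then have "k - 1 + 0 \<le> card V" using assms(2) by linarith
  then obtain V' where "finite V'" "card V' = 0" "Delta_nonneg (\<lambda>j. a (j + (k - 1))) V'"
    using Delta_nonneg_shift_subset[OF assms(1,3)] by blast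
  then have "Delta_nonneg (\<lambda>j. a (j + (k - 1))) {}" by simp
  then show "a (k - 1) * a (k + 1) \<le> (a k)\<^sup>2"
    unfolding Delta_nonneg_empty_iff using k by (simp add: numeral_2_eq_2)
qed

lemma Z_on_ones_single:
  assumes "finite V" "K \<subseteq> V" "\<And>I. I \<subseteq> V \<Longrightarrow> I \<noteq> K \<Longrightarrow> b (card I) = 0"
  shows "Z_on b V (\<lambda>_. 1) = b (card K)"
proof -
  have "Z_on b V (\<lambda>_. 1) = (\<Sum>I\<in>Pow V. if I = K then b (card K) else 0)"
    unfolding Z_on_def by (rule sum.cong) (use assms(3) in auto)
  also have "\<dots> = b (card K)" using assms(1,2) by simp
  finally show ?thesis .
qed

lemma internal_zero_imp_gap:
  fixes a :: "nat \<Rightarrow> real"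
  assumes "i < j" "j < k" "a i \<noteq> 0" "a k \<noteq> 0" "a j = 0"
  obtains p q where "p < j" "j < q" "q \<le> k" "a p \<noteq> 0" "a q \<noteq> 0"
    "\<And>l. p < l \<Longrightarrow> l < q \<Longrightarrow> a l = 0"
proof -
  define P where "P = {l. l < j \<and> a l \<noteq> 0}"
  define Q where "Q = {l. j < l \<and> l \<le> k \<and> a l \<noteq> 0}"
  have P: "finite P" "P \<noteq> {}" and Q: "finite Q" "Q \<noteq> {}"
    unfolding P_def Q_def using assms by auto
  have "a l = 0" if l: "Max P < l" "l < Min Q" for l
  proof (rule ccontr)
    assume "a l \<noteq> 0"
    consider "l < j" | "l = j" | "j < l" by linarith
    then show False
    proof cases
      case 1
      then have "l \<in> P" unfolding P_def using \<open>a l \<noteq> 0\<close> by simp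
      then show False using l Max_ge[OF P(1)] by fastforce
    next
      case 2
      then show False using \<open>a l \<noteq> 0\<close> assms(5) by simp
    next
      case 3
      have "Min Q \<le> k" using Min_in[OF Q] unfolding Q_def by auto
      then have "l \<in> Q" using 3 l \<open>a l \<noteq> 0\<close> unfolding Q_def by simp
      then show False using l Min_le[OF Q(1)] by fastforce
    qed
  qed
  moreover have "Max P \<in> P" "Min Q \<in> Q" using P Q by simp_all
  ultimately show ?thesis using that[of "Max P" "Min Q"] unfolding P_def Q_def by blast
qed
lemma Delta_on_ones_gap:
  assumes "finite V" "\<And>l. 0 < l \<Longrightarrow> l < card V + 2 \<Longrightarrow> b l = 0"
  shows "Delta_on b V (\<lambda>_. 1) = - b 0 * b (card V + 2)"
proof -
  have "Z_on b V (\<lambda>_. 1) = b (card ({}::nat set))"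
  proof (rule Z_on_ones_single)
    fix I assume "I \<subseteq> V" "I \<noteq> {}"
    then have "0 < card I" "card I \<le> card V"
      using assms(1) card_mono[of V I] finite_subset[of I V] by auto
    then show "b (card I) = 0" using assms(2) by simp
  qed (use assms(1) in auto)
  moreover have "Z_on (shift b) V (\<lambda>_. 1) = shift b (card ({}::nat set))"
  proof (rule Z_on_ones_single)
    fix I assume "I \<subseteq> V"
    then have "card I \<le> card V" using assms(1) card_mono[of V I] by auto
    then show "shift b (card I) = 0" using assms(2) by simp
  qed (use assms(1) in auto)
  moreover have "Z_on (shift (shift b)) V (\<lambda>_. 1) = shift (shift b) (card V)"
  proof (rule Z_on_ones_single)
    fix I assume "I \<subseteq> V" "I \<noteq> V"
    then have "card I < card V" using assms(1) by (metis psubsetI psubset_card_mono)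
    then show "shift (shift b) (card I) = 0" using assms(2) by simp
  qed (use assms(1) in auto)
  moreover have "b 1 = 0" using assms(2) by simp
  ultimately show ?thesis unfolding Delta_on_def by (simp add: numeral_2_eq_2)
qed

lemma Delta_nonneg_imp_no_internal_zeros:
  assumes "finite V" "card V + 2 = m" "Delta_nonneg a V" "\<forall>k\<le>m. a k \<ge> 0"
  shows "no_internal_zeros m a"
  unfolding no_internal_zeros_def
proof (intro allI impI)
  fix i j k assume h: "i < j \<and> j < k \<and> k \<le> m \<and> a i * a k \<noteq> 0"
  show "a j \<noteq> 0"
  proof
    assume "a j = 0"
    with h obtain p q where pq: "p < j" "j < q" "q \<le> k" "a p \<noteq> 0" "a q \<noteq> 0"
      and gap: "\<And>l. p < l \<Longrightarrow> l < q \<Longrightarrow> a l = 0"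
      by (auto elim: internal_zero_imp_gap)
    have "p + (q - p - 2) \<le> card V" using pq h assms(2) by linarith
    then obtain V' where V': "finite V'" "card V' = q - p - 2" "Delta_nonneg (\<lambda>l. a (l + p)) V'"
      using Delta_nonneg_shift_subset[OF assms(1,3)] by blast
    have q: "card V' + 2 + p = q" using V'(2) pq(1,2) by linarith
    have "Delta_on (\<lambda>l. a (l + p)) V' (\<lambda>_. 1) = - a (0 + p) * a (card V' + 2 + p)"
      by (rule Delta_on_ones_gap[OF V'(1)]) (use gap q in simp)
    moreover have "0 \<le> Delta_on (\<lambda>l. a (l + p)) V' (\<lambda>_. 1)"
      using V'(3) unfolding Delta_nonneg_def by simp
    ultimately have "a p * a q \<le> 0" using q by simp
    moreover have "a p > 0" "a q > 0" using pq assms(4) h by (auto simp: less_le)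
    ultimately show False using mult_pos_pos[of "a p" "a q"] by linarith
  qed
qed
definition lc_minor :: "(nat \<Rightarrow> real) \<Rightarrow> nat \<Rightarrow> nat \<Rightarrow> real" where
  "lc_minor a i j = a (Suc i) * a (Suc j) - a i * a (Suc (Suc j))"

lemma log_concave_cross_le:
  assumes nonneg: "\<forall>k\<le>m. a k \<ge> 0" and lc: "log_concave m a"
    and "\<And>k. i < k \<Longrightarrow> k \<le> i + d + 1 \<Longrightarrow> a k > 0" and "i + d + 2 \<le> m"
  shows "a i * a (i + d + 2) \<le> a (i + 1) * a (i + d + 1)"
  using assms(3,4)
proof (induction d)
  case 0
  then show ?case
    using lc[unfolded log_concave_def, rule_format, of "i + 1"]
    by (simp add: power2_eq_square mult.commute numeral_2_eq_2)
next
  case (Suc d)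
  define s where "s = i + d"
  have IH: "a i * a (s + 2) \<le> a (i + 1) * a (s + 1)" using Suc unfolding s_def by simp
  have L: "a (s + 1) * a (s + 3) \<le> (a (s + 2))\<^sup>2"
    using lc[unfolded log_concave_def, rule_format, of "s + 2"] Suc.prems(2)
    unfolding s_def by (simp add: numeral_3_eq_3 numeral_2_eq_2)
  have pos: "a (s + 1) > 0" using Suc.prems(1)[of "s + 1"] unfolding s_def by simp
  have nn: "a (s + 2) \<ge> 0" "a i \<ge> 0" using nonneg Suc.prems(2) unfolding s_def by auto
  have "a (s + 1) * (a i * a (s + 3)) = a i * (a (s + 1) * a (s + 3))"
    by (simp add: algebra_simps)
  also have "\<dots> \<le> a i * (a (s + 2))\<^sup>2" using L nn by (simp add: mult_left_mono)
  also have "\<dots> = (a i * a (s + 2)) * a (s + 2)" by (simp add: power2_eq_square algebra_simps)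
  also have "\<dots> \<le> (a (i + 1) * a (s + 1)) * a (s + 2)" using IH nn by (simp add: mult_right_mono)
  also have "\<dots> = a (s + 1) * (a (i + 1) * a (s + 2))" by (simp add: algebra_simps)
  finally have "a i * a (s + 3) \<le> a (i + 1) * a (s + 2)" using pos by simp
  then show ?case
    unfolding s_def by (simp add: numeral_3_eq_3 numeral_2_eq_2 add.commute add.left_commute)
qed

lemma lc_minor_nonneg:
  assumes nonneg: "\<forall>k\<le>m. a k \<ge> 0" and lc: "log_concave m a" and niz: "no_internal_zeros m a"
    and ij: "i \<le> j" "j + 2 \<le> m"
  shows "0 \<le> lc_minor a i j"
proof (cases "a i = 0 \<or> a (j + 2) = 0")
  case True
  have "0 \<le> a (Suc i) * a (Suc j)" using nonneg ij by simp
  then show ?thesis unfolding lc_minor_def using True by auto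
next
  case False
  have pos: "a k > 0" if "i < k" "k \<le> i + (j - i) + 1" for k
  proof -
    have "k < j + 2" using that ij by linarith
    then have "a k \<noteq> 0"
      using niz[unfolded no_internal_zeros_def, rule_format, of i k "j + 2"] False that(1) ij
      by simp
    then show ?thesis using nonneg \<open>k < j + 2\<close> ij by (simp add: less_le)
  qed
  have "i + (j - i) + 2 \<le> m" using ij by simp
  from log_concave_cross_le[OF nonneg lc pos this] ij show ?thesis unfolding lc_minor_def by simp
qed

definition count_le :: "nat set \<Rightarrow> nat \<Rightarrow> nat" where
  "count_le S x = card {z\<in>S. z \<le> x}"

definition dominated :: "nat set \<Rightarrow> nat set \<Rightarrow> bool" where
  "dominated I J \<longleftrightarrow> (\<forall>x. count_le I x \<le> count_le J x)"

text \<open>Only meaningful when I is not dominated by J (otherwise LEAST picks from an empty set).\<close>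

definition first_excess :: "nat set \<Rightarrow> nat set \<Rightarrow> nat" where
  "first_excess I J = (LEAST x. count_le J x < count_le I x)"

definition swap_tails :: "nat set \<times> nat set \<Rightarrow> nat set \<times> nat set" where
  "swap_tails p = (let I = fst p; J = snd p; x = first_excess I J in
     ({z\<in>I. z \<le> x} \<union> {z\<in>J. x < z}, {z\<in>J. z \<le> x} \<union> {z\<in>I. x < z}))"

lemma finite_lower_part: "finite {z\<in>S. z \<le> (x::nat)}"
  by (rule finite_subset[of _ "{..x}"]) auto

lemma count_le_0: "count_le S 0 \<le> 1"
  unfolding count_le_def using card_mono[of "{0::nat}" "{z\<in>S. z \<le> 0}"] by fastforce

lemma count_le_Suc: "count_le S (Suc y) \<le> Suc (count_le S y)"
proof -
  have "count_le S (Suc y) \<le> card (insert (Suc y) {z\<in>S. z \<le> y})"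
    unfolding count_le_def by (intro card_mono) (auto simp: finite_lower_part)
  also have "\<dots> \<le> Suc (count_le S y)"
    unfolding count_le_def by (simp add: finite_lower_part card_insert_if)
  finally show ?thesis .
qed

lemma count_le_mono: "y \<le> x \<Longrightarrow> count_le S y \<le> count_le S x"
  unfolding count_le_def by (intro card_mono finite_lower_part) auto

lemma count_le_le_card: "finite S \<Longrightarrow> count_le S x \<le> card S"
  unfolding count_le_def by (intro card_mono) auto

lemma card_greater_part:
  assumes "finite S"
  shows "card {z\<in>S. (x::nat) < z} = card S - count_le S x"
proof -
  have "S = {z\<in>S. z \<le> x} \<union> {z\<in>S. x < z}" "{z\<in>S. z \<le> x} \<inter> {z\<in>S. x < z} = {}" by auto
  then have "card S = count_le S x + card {z\<in>S. x < z}"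
    unfolding count_le_def using assms by (metis (no_types, lifting) card_Un_disjoint finite_Un)
  then show ?thesis by simp
qed

lemma dominated_card_le:
  assumes "finite I" "finite J" "dominated I J"
  shows "card I \<le> card J"
proof -
  define x where "x = \<Sum>(I \<union> J)"
  have "\<And>z. z \<in> I \<union> J \<Longrightarrow> z \<le> x" unfolding x_def using assms by (intro member_le_sum) auto
  then have "{z\<in>I. z \<le> x} = I" "{z\<in>J. z \<le> x} = J" by auto
  then show ?thesis using assms(3) unfolding dominated_def count_le_def by metis
qed

lemma count_le_first_excess:
  assumes "\<not> dominated I J"
  shows "count_le I (first_excess I J) = Suc (count_le J (first_excess I J))"
    and "\<And>x. x < first_excess I J \<Longrightarrow> count_le I x \<le> count_le J x"
proof -
  obtain x where "count_le J x < count_le I x"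
    using assms unfolding dominated_def by (auto simp: not_le)
  then have lt: "count_le J (first_excess I J) < count_le I (first_excess I J)"
    unfolding first_excess_def by (rule LeastI)
  show before: "\<And>x. x < first_excess I J \<Longrightarrow> count_le I x \<le> count_le J x"
    unfolding first_excess_def using not_less_Least not_le by blast
  show "count_le I (first_excess I J) = Suc (count_le J (first_excess I J))"
  proof (cases "first_excess I J")
    case 0
    then show ?thesis using lt count_le_0[of I] by simp
  next
    case (Suc y)
    have "count_le I y \<le> count_le J y" using before Suc by simp
    moreover have "count_le I (Suc y) \<le> Suc (count_le I y)" by (rule count_le_Suc)
    moreover have "count_le J y \<le> count_le J (Suc y)" by (rule count_le_mono) simp
    ultimately show ?thesis using lt Suc by simp
  qed
qed

lemma count_le_swap_tails:
  assumes "z \<le> first_excess I J"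
  shows "count_le (fst (swap_tails (I, J))) z = count_le I z"
    and "count_le (snd (swap_tails (I, J))) z = count_le J z"
proof -
  have "{w \<in> fst (swap_tails (I, J)). w \<le> z} = {w\<in>I. w \<le> z}"
    "{w \<in> snd (swap_tails (I, J)). w \<le> z} = {w\<in>J. w \<le> z}"
    using assms unfolding swap_tails_def Let_def by auto
  then show "count_le (fst (swap_tails (I, J))) z = count_le I z"
    and "count_le (snd (swap_tails (I, J))) z = count_le J z"
    unfolding count_le_def by simp_all
qed

lemma swap_tails_first_excess:
  assumes "\<not> dominated I J"
  shows "\<not> dominated (fst (swap_tails (I, J))) (snd (swap_tails (I, J)))"
    and "first_excess (fst (swap_tails (I, J))) (snd (swap_tails (I, J))) = first_excess I J"
proof -
  define I' where "I' = fst (swap_tails (I, J))"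
  define J' where "J' = snd (swap_tails (I, J))"
  have same: "count_le I' x = count_le I x" "count_le J' x = count_le J x"
    if "x \<le> first_excess I J" for x
    using count_le_swap_tails[OF that] unfolding I'_def J'_def by auto
  have excess: "count_le J' (first_excess I J) < count_le I' (first_excess I J)"
    using same[of "first_excess I J"] count_le_first_excess(1)[OF assms] by simp
  then show "\<not> dominated I' J'" unfolding dominated_def by (auto simp: not_le)
  show "first_excess I' J' = first_excess I J"
    unfolding first_excess_def[of I' J']
  proof (rule Least_equality)
    fix y assume lt: "count_le J' y < count_le I' y"
    show "first_excess I J \<le> y"
    proof (rule ccontr)
      assume "\<not> first_excess I J \<le> y"
      then show False using same[of y] count_le_first_excess(2)[OF assms, of y] lt by simp
    qed
  qed (rule excess)
qed

lemma swap_tails_involutive: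
  assumes "\<not> dominated I J"
  shows "swap_tails (swap_tails (I, J)) = (I, J)"
  using swap_tails_first_excess(2)[OF assms]
  unfolding swap_tails_def[of "swap_tails (I, J)"] Let_def
  by (simp add: swap_tails_def Let_def) auto

lemma swap_tails_Un_Int:
  "fst (swap_tails (I, J)) \<union> snd (swap_tails (I, J)) = I \<union> J"
  "fst (swap_tails (I, J)) \<inter> snd (swap_tails (I, J)) = I \<inter> J"
  unfolding swap_tails_def Let_def by auto

lemma card_swap_tails:
  assumes "finite I" "finite J" "\<not> dominated I J"
  shows "card (fst (swap_tails (I, J))) = Suc (card J)"
    and "card (snd (swap_tails (I, J))) = card I - 1"
    and "card I \<ge> 1"
proof -
  define x where "x = first_excess I J"
  have cx: "count_le I x = Suc (count_le J x)"
    unfolding x_def by (rule count_le_first_excess(1)[OF assms(3)])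
  have "card (fst (swap_tails (I, J))) = count_le I x + card {z\<in>J. x < z}"
    unfolding swap_tails_def Let_def count_le_def fst_conv x_def
    using assms by (subst card_Un_disjoint) (auto simp: finite_lower_part)
  also have "\<dots> = Suc (card J)"
    using card_greater_part[OF assms(2), of x] count_le_le_card[OF assms(2), of x] cx by simp
  finally show "card (fst (swap_tails (I, J))) = Suc (card J)" .
  have "card (snd (swap_tails (I, J))) = count_le J x + card {z\<in>I. x < z}"
    unfolding swap_tails_def Let_def count_le_def snd_conv x_def
    using assms by (subst card_Un_disjoint) (auto simp: finite_lower_part)
  also have "\<dots> = card I - 1"
    using card_greater_part[OF assms(1), of x] count_le_le_card[OF assms(1), of x] cx by simp
  finally show "card (snd (swap_tails (I, J))) = card I - 1" .
  show "card I \<ge> 1" using count_le_le_card[OF assms(1), of x] cx by simp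
qed

lemma lc_minor_antisym: "1 \<le> i \<Longrightarrow> lc_minor a (Suc j) (i - 1) = - lc_minor a i j"
  unfolding lc_minor_def by (cases i) (auto simp: algebra_simps)

lemma sum_sign_reversing_involution:
  fixes g :: "'b \<Rightarrow> real"
  assumes "finite X" "\<And>x. x \<in> X \<Longrightarrow> f x \<in> X" "\<And>x. x \<in> X \<Longrightarrow> f (f x) = x"
    and "\<And>x. x \<in> X \<Longrightarrow> g (f x) = - g x"
  shows "sum g X = 0"
proof -
  have "bij_betw f X X"
    by (rule bij_betw_byWitness[where f' = f]) (use assms in auto)
  then have "sum g X = sum (g \<circ> f) X"
    by (simp add: sum.reindex_bij_betw)
  also have "\<dots> = - sum g X" using assms(4) by (simp add: sum_negf)
  finally show ?thesis by simp
qed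

lemma sum_lc_minor_eq_dominated_part:
  assumes "finite X" "\<And>p. p \<in> X \<Longrightarrow> finite (fst p) \<and> finite (snd p)"
    and "\<And>p. p \<in> X \<Longrightarrow> \<not> dominated (fst p) (snd p) \<Longrightarrow> swap_tails p \<in> X"
    and "\<And>p. p \<in> X \<Longrightarrow> \<not> dominated (fst p) (snd p) \<Longrightarrow> F (swap_tails p) = F p"
  shows "(\<Sum>p\<in>X. lc_minor a (card (fst p)) (card (snd p)) * F p)
       = (\<Sum>p\<in>{p\<in>X. dominated (fst p) (snd p)}. lc_minor a (card (fst p)) (card (snd p)) * F p)"
proof -
  define g where "g p = lc_minor a (card (fst p)) (card (snd p)) * F p" for p
  have "sum g {p\<in>X. \<not> dominated (fst p) (snd p)} = 0"
  proof (rule sum_sign_reversing_involution[where f = swap_tails])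
    fix p assume p: "p \<in> {p \<in> X. \<not> dominated (fst p) (snd p)}"
    obtain I J where pIJ: "p = (I, J)" by fastforce
    have nd: "\<not> dominated I J" "(I, J) \<in> X" using p pIJ by auto
    show "swap_tails p \<in> {p \<in> X. \<not> dominated (fst p) (snd p)}"
      using assms(3)[OF nd(2)] swap_tails_first_excess(1)[OF nd(1)] nd pIJ by simp
    show "swap_tails (swap_tails p) = p" using swap_tails_involutive[OF nd(1)] pIJ by simp
    have "finite I" "finite J" using assms(2)[OF nd(2)] by auto
    then show "g (swap_tails p) = - g p"
      unfolding g_def using card_swap_tails[OF _ _ nd(1)] lc_minor_antisym[of "card I" a "card J"]
        assms(4)[OF nd(2)] nd(1) pIJ by simp
  qed (use assms(1) in simp)
  moreover have "sum g X
      = sum g {p\<in>X. dominated (fst p) (snd p)} + sum g {p\<in>X. \<not> dominated (fst p) (snd p)}"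
    using assms(1) by (subst sum.union_disjoint[symmetric]) (auto intro: sum.cong)
  ultimately show ?thesis unfolding g_def by simp
qed

abbreviation pair_weight :: "(nat \<Rightarrow> real) \<Rightarrow> nat set \<times> nat set \<Rightarrow> real" where
  "pair_weight y p \<equiv> (\<Prod>i\<in>fst p. y i) * (\<Prod>i\<in>snd p. y i)"

lemma Delta_on_pair_expansion:
  "Delta_on a V y = (\<Sum>p\<in>Pow V \<times> Pow V. lc_minor a (card (fst p)) (card (snd p)) * pair_weight y p)"
proof -
  have "Delta_on a V y
      = (\<Sum>I\<in>Pow V. \<Sum>J\<in>Pow V. a (Suc (card I)) * prod y I * (a (Suc (card J)) * prod y J))
      - (\<Sum>I\<in>Pow V. \<Sum>J\<in>Pow V. a (card I) * prod y I * (a (Suc (Suc (card J))) * prod y J))"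
    unfolding Delta_on_def Z_on_def power2_eq_square sum_product by simp
  also have "\<dots> = (\<Sum>I\<in>Pow V. \<Sum>J\<in>Pow V. lc_minor a (card I) (card J) * (prod y I * prod y J))"
    unfolding sum_subtractf[symmetric] lc_minor_def by (simp add: algebra_simps)
  finally show ?thesis
    unfolding sum.cartesian_product by (simp add: case_prod_beta)
qed

lemma pair_weight_swap_tails:
  assumes "finite I" "finite J"
  shows "pair_weight y (swap_tails (I, J)) = pair_weight y (I, J)"
proof -
  let ?I' = "fst (swap_tails (I, J))" and ?J' = "snd (swap_tails (I, J))"
  have "finite ?I'" "finite ?J'"
    using swap_tails_Un_Int(1)[of I J] assms by (metis finite_Un)+
  then have "pair_weight y (swap_tails (I, J)) = prod y (?I' \<union> ?J') * prod y (?I' \<inter> ?J')"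
    by (simp add: prod.union_inter)
  also have "\<dots> = pair_weight y (I, J)"
    unfolding swap_tails_Un_Int using assms by (simp add: prod.union_inter)
  finally show ?thesis .
qed

lemma Delta_on_dominated_expansion:
  assumes "finite V"
  shows "Delta_on a V y = (\<Sum>p\<in>{p\<in>Pow V \<times> Pow V. dominated (fst p) (snd p)}.
    lc_minor a (card (fst p)) (card (snd p)) * pair_weight y p)"
  unfolding Delta_on_pair_expansion
proof (rule sum_lc_minor_eq_dominated_part)
  fix p assume p: "p \<in> Pow V \<times> Pow V"
  then show fp: "finite (fst p) \<and> finite (snd p)" using assms finite_subset by auto
  show "swap_tails p \<in> Pow V \<times> Pow V"
    using swap_tails_Un_Int(1)[of "fst p" "snd p"] p by (auto simp: mem_Times_iff)
  show "pair_weight y (swap_tails p) = pair_weight y p"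
    using pair_weight_swap_tails[of "fst p" "snd p" y] fp by simp
qed (use assms in simp)

definition two_col :: "nat \<Rightarrow> nat \<Rightarrow> nat list" where
  "two_col t u = replicate t 2 @ replicate u 1"

lemma two_col_is_partition: "is_partition (two_col t u)"
  unfolding is_partition_def two_col_def by (auto simp: sorted_append)

lemma mset_two_col: "mset (two_col t u) = replicate_mset t 2 + replicate_mset u 1"
  unfolding two_col_def by simp

lemma two_col_count:
  "count (mset (two_col t u)) 2 = t" "count (mset (two_col t u)) 1 = u"
  "length (two_col t u) = t + u"
  unfolding mset_two_col by (auto simp: two_col_def)

lemma young_cells_two_col_iff:
  assumes "l \<le> p"
  shows "(r, c) \<in> young_cells (two_col l (p - l)) \<longleftrightarrow> (c = 0 \<and> r < p) \<or> (c = 1 \<and> r < l)"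
proof -
  have "length (two_col l (p - l)) = p" using assms unfolding two_col_def by simp
  moreover have "two_col l (p - l) ! r = (if r < l then 2 else 1)" if "r < p" for r
    using that assms unfolding two_col_def by (auto simp: nth_append)
  ultimately have "(r, c) \<in> young_cells (two_col l (p - l)) \<longleftrightarrow> r < p \<and> c < (if r < l then 2 else 1)"
    unfolding young_cells_def by auto
  then show ?thesis using assms by (cases "r < l") auto
qed

lemma young_cells_two_col:
  assumes "l \<le> p"
  shows "young_cells (two_col l (p - l)) = (\<lambda>r. (r, 0)) ` {..<p} \<union> (\<lambda>r. (r, 1)) ` {..<l}"
  using young_cells_two_col_iff[OF assms] by auto

lemma ssyt_two_colD:
  assumes "l \<le> p" "T \<in> ssyt (two_col l (p - l)) V"
  shows "\<And>r c. \<not> ((c = 0 \<and> r < p) \<or> (c = 1 \<and> r < l)) \<Longrightarrow> T (r, c) = 0"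
    and "\<And>r. r < p \<Longrightarrow> T (r, 0) \<in> V" and "\<And>r. r < l \<Longrightarrow> T (r, 1) \<in> V"
    and "\<And>r. r < l \<Longrightarrow> T (r, 0) \<le> T (r, 1)"
    and "\<And>r. Suc r < p \<Longrightarrow> T (r, 0) < T (Suc r, 0)"
    and "\<And>r. Suc r < l \<Longrightarrow> T (r, 1) < T (Suc r, 1)"
proof -
  note cells = young_cells_two_col_iff[OF assms(1)]
  have zero: "\<And>x. x \<notin> young_cells (two_col l (p - l)) \<Longrightarrow> T x = 0"
    and entry: "\<And>x. x \<in> young_cells (two_col l (p - l)) \<Longrightarrow> T x \<in> V"
    and row: "\<And>r c. (r, c + 1) \<in> young_cells (two_col l (p - l)) \<Longrightarrow> T (r, c) \<le> T (r, c + 1)"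
    and col: "\<And>r c. (r + 1, c) \<in> young_cells (two_col l (p - l)) \<Longrightarrow> T (r, c) < T (r + 1, c)"
    using assms(2) unfolding ssyt_def by blast+
  show "\<And>r c. \<not> ((c = 0 \<and> r < p) \<or> (c = 1 \<and> r < l)) \<Longrightarrow> T (r, c) = 0"
    and "\<And>r. r < p \<Longrightarrow> T (r, 0) \<in> V" and "\<And>r. r < l \<Longrightarrow> T (r, 1) \<in> V"
    using zero entry cells by blast+
  show "\<And>r. r < l \<Longrightarrow> T (r, 0) \<le> T (r, 1)"
    using row[of _ 0] cells by simp
  show "\<And>r. Suc r < p \<Longrightarrow> T (r, 0) < T (Suc r, 0)"
    and "\<And>r. Suc r < l \<Longrightarrow> T (r, 1) < T (Suc r, 1)"
    using col[of _ 0] col[of _ 1] cells by simp_all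
qed

lemma strict_mono_on_lessThanI:
  fixes f :: "nat \<Rightarrow> 'a :: order"
  assumes "\<And>r. Suc r < n \<Longrightarrow> f r < f (Suc r)"
  shows "strict_mono_on {..<n} f"
proof (rule strict_mono_onI)
  fix r s assume "r \<in> {..<n}" "s \<in> {..<n}" "r < s"
  then show "f r < f s"
  proof (induction s)
    case (Suc s)
    then show ?case using assms[of s] by (cases "r = s") (auto intro: order.strict_trans)
  qed simp
qed

lemma sorted_list_of_set_strict_mono_on_image:
  fixes f :: "nat \<Rightarrow> 'a :: linorder"
  assumes "strict_mono_on {..<n} f"
  shows "sorted_list_of_set (f ` {..<n}) = map f [0..<n]"
proof -
  have "sorted_wrt (<) (map f [0..<n])"
    unfolding sorted_wrt_iff_nth_less using assms by (auto simp: strict_mono_on_def)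
  then have "sorted_list_of_set (set (map f [0..<n])) = map f [0..<n]"
    by (intro sorted_list_of_set.idem_if_sorted_distinct) (auto simp: strict_sorted_iff)
  moreover have "set (map f [0..<n]) = f ` {..<n}" by auto
  ultimately show ?thesis by simp
qed

lemma sorted_list_of_set_nth_less:
  "finite (S :: nat set) \<Longrightarrow> i < j \<Longrightarrow> j < card S \<Longrightarrow> sorted_list_of_set S ! i < sorted_list_of_set S ! j"
  using strict_sorted_list_of_set[of S] sorted_wrt_iff_nth_less by (metis length_sorted_list_of_set)

lemma sorted_list_of_set_nth_le:
  "finite (S :: nat set) \<Longrightarrow> i \<le> j \<Longrightarrow> j < card S \<Longrightarrow> sorted_list_of_set S ! i \<le> sorted_list_of_set S ! j"
  using sorted_list_of_set_nth_less[of S i j] by (cases "i = j") auto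

lemma sorted_list_of_set_nth_mem:
  "finite (S :: nat set) \<Longrightarrow> r < card S \<Longrightarrow> sorted_list_of_set S ! r \<in> S"
  by (metis nth_mem set_sorted_list_of_set length_sorted_list_of_set)

lemma sorted_list_of_set_nth_image:
  "finite (S :: nat set) \<Longrightarrow> (\<lambda>r. sorted_list_of_set S ! r) ` {..<card S} = S"
  by (metis atLeast_upt image_set length_sorted_list_of_set lessThan_atLeast0 map_nth
      set_sorted_list_of_set)

lemma dominated_nth_le:
  assumes "finite I" "finite J" "dominated I J" "r < card I"
  shows "sorted_list_of_set J ! r \<le> sorted_list_of_set I ! r"
proof (rule ccontr)
  let ?I = "\<lambda>s. sorted_list_of_set I ! s" and ?J = "\<lambda>s. sorted_list_of_set J ! s"
  assume "\<not> ?J r \<le> ?I r"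
  then have gt: "?I r < ?J r" by simp
  have "inj_on ?I {..<card I}"
    using sorted_list_of_set_nth_less[OF assms(1)]
    by (intro strict_mono_on_imp_inj_on strict_mono_onI) auto
  then have "inj_on ?I {..r}" by (rule inj_on_subset) (use assms(4) in auto)
  then have "Suc r = card (?I ` {..r})" by (simp add: card_image)
  also have "\<dots> \<le> count_le I (?I r)"
    unfolding count_le_def using assms(1,4)
    by (intro card_mono finite_lower_part)
       (auto intro!: sorted_list_of_set_nth_mem sorted_list_of_set_nth_le)
  finally have I_part: "Suc r \<le> count_le I (?I r)" .
  have "{z\<in>J. z \<le> ?I r} \<subseteq> ?J ` {..<r}"
  proof
    fix z assume z: "z \<in> {z\<in>J. z \<le> ?I r}"
    then have "z \<in> ?J ` {..<card J}" using sorted_list_of_set_nth_image[OF assms(2)] by simp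
    then obtain s where s: "s < card J" "?J s = z" by auto
    have "s < r"
    proof (rule ccontr)
      assume "\<not> s < r"
      then have "?J r \<le> ?J s" using sorted_list_of_set_nth_le[OF assms(2), of r s] s by simp
      then show False using z s gt by simp
    qed
    then show "z \<in> ?J ` {..<r}" using s by auto
  qed
  then have "count_le J (?I r) \<le> card (?J ` {..<r})"
    unfolding count_le_def by (intro card_mono) simp_all
  also have "\<dots> \<le> r" using card_image_le[of "{..<r}" ?J] by simp
  finally have "count_le J (?I r) \<le> r" .
  moreover have "count_le I (?I r) \<le> count_le J (?I r)"
    using assms(3) unfolding dominated_def by blast
  ultimately show False using I_part by linarith
qed

definition dominated_pairs :: "nat set \<Rightarrow> nat \<Rightarrow> nat \<Rightarrow> (nat set \<times> nat set) set" where
  "dominated_pairs V l p =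
     {q \<in> Pow V \<times> Pow V. dominated (fst q) (snd q) \<and> card (fst q) = l \<and> card (snd q) = p}"

text \<open>Column 0 of the tableau lists J and column 1 lists I, both increasingly; the row condition
  J_r \<le> I_r is exactly what dominance of I by J provides (dominated_nth_le).\<close>

definition pair_tableau :: "nat \<Rightarrow> nat \<Rightarrow> nat set \<times> nat set \<Rightarrow> nat \<times> nat \<Rightarrow> nat" where
  "pair_tableau l p q = (\<lambda>(r, c).
     if c = 0 \<and> r < p then sorted_list_of_set (snd q) ! r
     else if c = 1 \<and> r < l then sorted_list_of_set (fst q) ! r else 0)"

definition tableau_pair :: "nat \<Rightarrow> nat \<Rightarrow> (nat \<times> nat \<Rightarrow> nat) \<Rightarrow> nat set \<times> nat set" where
  "tableau_pair l p T = ((\<lambda>r. T (r, 1)) ` {..<l}, (\<lambda>r. T (r, 0)) ` {..<p})"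

lemma ssyt_two_col_columns:
  assumes "l \<le> p" "T \<in> ssyt (two_col l (p - l)) V"
  shows "inj_on (\<lambda>r. T (r, 0)) {..<p}" "inj_on (\<lambda>r. T (r, 1)) {..<l}"
    and "sorted_list_of_set ((\<lambda>r. T (r, 0)) ` {..<p}) = map (\<lambda>r. T (r, 0)) [0..<p]"
    and "sorted_list_of_set ((\<lambda>r. T (r, 1)) ` {..<l}) = map (\<lambda>r. T (r, 1)) [0..<l]"
proof -
  have "strict_mono_on {..<p} (\<lambda>r. T (r, 0))" "strict_mono_on {..<l} (\<lambda>r. T (r, 1))"
    using ssyt_two_colD(5,6)[OF assms] by (auto intro: strict_mono_on_lessThanI)
  then show "inj_on (\<lambda>r. T (r, 0)) {..<p}" "inj_on (\<lambda>r. T (r, 1)) {..<l}"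
    and "sorted_list_of_set ((\<lambda>r. T (r, 0)) ` {..<p}) = map (\<lambda>r. T (r, 0)) [0..<p]"
    and "sorted_list_of_set ((\<lambda>r. T (r, 1)) ` {..<l}) = map (\<lambda>r. T (r, 1)) [0..<l]"
    by (auto intro: strict_mono_on_imp_inj_on sorted_list_of_set_strict_mono_on_image)
qed

lemma card_lower_part_image:
  assumes "inj_on f A"
  shows "card {z \<in> f ` A. z \<le> x} = card {r\<in>A. f r \<le> (x::nat)}"
proof -
  have "{z \<in> f ` A. z \<le> x} = f ` {r\<in>A. f r \<le> x}" by auto
  moreover have "inj_on f {r\<in>A. f r \<le> x}" using assms inj_on_subset by fastforce
  ultimately show ?thesis by (simp add: card_image)
qed

lemma tableau_pair_mem_dominated_pairs:
  assumes "l \<le> p" "T \<in> ssyt (two_col l (p - l)) V"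
  shows "tableau_pair l p T \<in> dominated_pairs V l p"
proof -
  note col = ssyt_two_col_columns[OF assms]
  have "{r\<in>{..<l}. T (r, 1) \<le> x} \<subseteq> {r\<in>{..<p}. T (r, 0) \<le> x}" for x
    using ssyt_two_colD(4)[OF assms] assms(1) by fastforce
  then have "card {r\<in>{..<l}. T (r, 1) \<le> x} \<le> card {r\<in>{..<p}. T (r, 0) \<le> x}" for x
    by (rule card_mono[rotated]) simp
  then have "dominated ((\<lambda>r. T (r, 1)) ` {..<l}) ((\<lambda>r. T (r, 0)) ` {..<p})"
    unfolding dominated_def count_le_def card_lower_part_image[OF col(1)]
      card_lower_part_image[OF col(2)]
    by blast
  then show ?thesis
    unfolding dominated_pairs_def tableau_pair_def
    using ssyt_two_colD(2,3)[OF assms] col(1,2) by (auto simp: card_image)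
qed

lemma pair_tableau_tableau_pair:
  assumes "l \<le> p" "T \<in> ssyt (two_col l (p - l)) V"
  shows "pair_tableau l p (tableau_pair l p T) = T"
proof
  fix x :: "nat \<times> nat"
  obtain r c where "x = (r, c)" by fastforce
  then show "pair_tableau l p (tableau_pair l p T) x = T x"
    unfolding pair_tableau_def tableau_pair_def
    using ssyt_two_col_columns(3,4)[OF assms] ssyt_two_colD(1)[OF assms, of c r] by auto
qed

lemma prod_young_cells_two_col:
  assumes "l \<le> p" "T \<in> ssyt (two_col l (p - l)) V"
  shows "(\<Prod>x\<in>young_cells (two_col l (p - l)). y (T x)) = pair_weight y (tableau_pair l p T)"
proof -
  note col = ssyt_two_col_columns[OF assms]
  have "(\<Prod>x\<in>young_cells (two_col l (p - l)). y (T x))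
      = (\<Prod>x\<in>(\<lambda>r. (r, 0)) ` {..<p}. y (T x)) * (\<Prod>x\<in>(\<lambda>r. (r, 1)) ` {..<l}. y (T x))"
    unfolding young_cells_two_col[OF assms(1)] by (rule prod.union_disjoint) auto
  also have "\<dots> = (\<Prod>r\<in>{..<p}. y (T (r, 0))) * (\<Prod>r\<in>{..<l}. y (T (r, 1)))"
    by (simp add: prod.reindex inj_on_def)
  also have "\<dots> = pair_weight y (tableau_pair l p T)"
    unfolding tableau_pair_def using col(1,2) by (simp add: prod.reindex)
  finally show ?thesis .
qed

lemma pair_tableau_mem_ssyt:
  assumes "finite V" "l \<le> p" "q \<in> dominated_pairs V l p"
  shows "pair_tableau l p q \<in> ssyt (two_col l (p - l)) V"
proof -
  obtain I J where q: "q = (I, J)" by fastforce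
  have IJ: "I \<subseteq> V" "J \<subseteq> V" "dominated I J" "card I = l" "card J = p"
    using assms(3) unfolding q dominated_pairs_def by auto
  have fin: "finite I" "finite J" using IJ assms(1) by (auto intro: finite_subset)
  note cells = young_cells_two_col_iff[OF assms(2)]
  show ?thesis
    unfolding ssyt_def
  proof (intro CollectI conjI allI impI ballI)
    fix x :: "nat \<times> nat"
    assume "x \<notin> young_cells (two_col l (p - l))"
    then show "pair_tableau l p q x = 0" unfolding pair_tableau_def using cells by (cases x) auto
  next
    fix x :: "nat \<times> nat"
    assume "x \<in> young_cells (two_col l (p - l))"
    then show "pair_tableau l p q x \<in> V"
      unfolding pair_tableau_def q using cells sorted_list_of_set_nth_mem fin IJ by (cases x) auto
  next
    fix r c assume "(r, c + 1) \<in> young_cells (two_col l (p - l))"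
    then have "c = 0" "r < l" using cells by auto
    then show "pair_tableau l p q (r, c) \<le> pair_tableau l p q (r, c + 1)"
      unfolding pair_tableau_def q using dominated_nth_le[OF fin IJ(3), of r] IJ assms(2) by auto
  next
    fix r c assume "(r + 1, c) \<in> young_cells (two_col l (p - l))"
    then have "(c = 0 \<and> Suc r < p) \<or> (c = 1 \<and> Suc r < l)" using cells by auto
    then show "pair_tableau l p q (r, c) < pair_tableau l p q (r + 1, c)"
      unfolding pair_tableau_def q using sorted_list_of_set_nth_less fin IJ by auto
  qed
qed

lemma tableau_pair_pair_tableau:
  assumes "finite V" "q \<in> dominated_pairs V l p"
  shows "tableau_pair l p (pair_tableau l p q) = q"
proof -
  obtain I J where q: "q = (I, J)" by fastforce
  have IJ: "card I = l" "card J = p" "finite I" "finite J"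
    using assms finite_subset unfolding q dominated_pairs_def by auto
  have "(\<lambda>r. pair_tableau l p q (r, 1)) ` {..<l} = (\<lambda>r. sorted_list_of_set I ! r) ` {..<card I}"
    "(\<lambda>r. pair_tableau l p q (r, 0)) ` {..<p} = (\<lambda>r. sorted_list_of_set J ! r) ` {..<card J}"
    unfolding pair_tableau_def q IJ(1,2) by auto
  then show ?thesis
    unfolding tableau_pair_def q
    using sorted_list_of_set_nth_image[OF IJ(3)] sorted_list_of_set_nth_image[OF IJ(4)] by simp
qed

lemma schur_two_col:
  assumes "finite V" "l \<le> p"
  shows "schur (two_col l (p - l)) V y = (\<Sum>q\<in>dominated_pairs V l p. pair_weight y q)"
  unfolding schur_def
  by (rule sum.reindex_bij_witness[where i = "pair_tableau l p" and j = "tableau_pair l p"])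
     (use assms in \<open>simp_all add: pair_tableau_tableau_pair tableau_pair_mem_dominated_pairs
        prod_young_cells_two_col pair_tableau_mem_ssyt tableau_pair_pair_tableau\<close>)

lemma sum_group_by_cards:
  fixes w :: "nat set \<times> nat set \<Rightarrow> real"
  assumes "finite X" "finite N" "\<And>q. q \<in> X \<Longrightarrow> (card (fst q), card (snd q)) \<in> N"
  shows "(\<Sum>q\<in>X. c (card (fst q)) (card (snd q)) * w q)
       = (\<Sum>n\<in>N. c (fst n) (snd n) * (\<Sum>q\<in>{q\<in>X. card (fst q) = fst n \<and> card (snd q) = snd n}. w q))"
proof -
  have "(\<Sum>q\<in>X. c (card (fst q)) (card (snd q)) * w q)
      = (\<Sum>n\<in>N. \<Sum>q\<in>{q. q \<in> X \<and> (card (fst q), card (snd q)) = n}.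
          c (card (fst q)) (card (snd q)) * w q)"
    by (rule sum.group[symmetric]) (use assms in auto)
  also have "\<dots> = (\<Sum>n\<in>N. c (fst n) (snd n) *
      (\<Sum>q\<in>{q\<in>X. card (fst q) = fst n \<and> card (snd q) = snd n}. w q))"
    by (intro sum.cong refl) (auto simp: sum_distrib_left intro!: sum.cong)
  finally show ?thesis .
qed

lemma Delta_on_schur_expansion:
  assumes "finite V"
  shows "Delta_on a V y = (\<Sum>lp\<in>{lp. fst lp \<le> snd lp \<and> snd lp \<le> card V}.
    lc_minor a (fst lp) (snd lp) * schur (two_col (fst lp) (snd lp - fst lp)) V y)"
proof -
  define D where "D = {p \<in> Pow V \<times> Pow V. dominated (fst p) (snd p)}"
  define N where "N = {lp :: nat \<times> nat. fst lp \<le> snd lp \<and> snd lp \<le> card V}"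
  have "Delta_on a V y = (\<Sum>lp\<in>N. lc_minor a (fst lp) (snd lp) *
    (\<Sum>q\<in>{q\<in>D. card (fst q) = fst lp \<and> card (snd q) = snd lp}. pair_weight y q))"
    unfolding Delta_on_dominated_expansion[OF assms] D_def[symmetric]
  proof (rule sum_group_by_cards)
    show "finite N" unfolding N_def by (rule finite_subset[of _ "{..card V} \<times> {..card V}"]) auto
    fix q assume "q \<in> D"
    then have q: "fst q \<subseteq> V" "snd q \<subseteq> V" "dominated (fst q) (snd q)" unfolding D_def by auto
    then have "finite (fst q)" "finite (snd q)" using assms finite_subset by auto
    then show "(card (fst q), card (snd q)) \<in> N"
      unfolding N_def using dominated_card_le q card_mono[OF assms q(2)] by simp
  qed (use assms in \<open>simp add: D_def\<close>)
  also have "\<dots> = (\<Sum>lp\<in>N.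
      lc_minor a (fst lp) (snd lp) * schur (two_col (fst lp) (snd lp - fst lp)) V y)"
    unfolding N_def
    by (intro sum.cong refl arg_cong[where f = "(*) _"])
       (auto simp: schur_two_col[OF assms] dominated_pairs_def D_def intro: sum.cong)
  finally show ?thesis unfolding N_def .
qed

text \<open>The pairs (I, J) with I \<inter> J = T and I \<union> J = T \<union> U all carry the same monomial;
  (card U choose k) of them have card I = card T + k.\<close>

definition mono_coeff :: "(nat \<Rightarrow> real) \<Rightarrow> nat \<Rightarrow> nat \<Rightarrow> real" where
  "mono_coeff a t u = (\<Sum>k=0..u. real (u choose k) * lc_minor a (t + k) (t + u - k))"

definition pairs_over :: "nat set \<Rightarrow> nat set \<Rightarrow> (nat set \<times> nat set) set" where
  "pairs_over T U = (\<lambda>K. (T \<union> K, T \<union> (U - K))) ` Pow U"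

lemma pairs_over_iff:
  assumes "T \<inter> U = {}"
  shows "p \<in> pairs_over T U \<longleftrightarrow> fst p \<union> snd p = T \<union> U \<and> fst p \<inter> snd p = T"
proof
  assume "p \<in> pairs_over T U"
  then show "fst p \<union> snd p = T \<union> U \<and> fst p \<inter> snd p = T"
    using assms unfolding pairs_over_def by auto
next
  assume p: "fst p \<union> snd p = T \<union> U \<and> fst p \<inter> snd p = T"
  then have "fst p - T \<in> Pow U" "p = (T \<union> (fst p - T), T \<union> (U - (fst p - T)))"
    using assms by (auto simp: prod_eq_iff)
  then show "p \<in> pairs_over T U" unfolding pairs_over_def by blast
qed

lemma sum_Pow_by_card:
  assumes "finite U"
  shows "(\<Sum>K\<in>Pow U. f (card K)) = (\<Sum>k=0..card U. real (card U choose k) * f k)"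
proof -
  have "(\<Sum>K\<in>Pow U. f (card K)) = (\<Sum>k\<in>{0..card U}. \<Sum>K\<in>{K. K \<in> Pow U \<and> card K = k}. f (card K))"
    by (rule sum.group[symmetric]) (use assms in \<open>auto intro: card_mono\<close>)
  also have "\<dots> = (\<Sum>k=0..card U. real (card U choose k) * f k)"
    using n_subsets[OF assms] by (intro sum.cong refl) (simp add: Pow_def)
  finally show ?thesis .
qed

lemma sum_lc_minor_pairs_over:
  assumes "finite T" "finite U" "T \<inter> U = {}"
  shows "(\<Sum>p\<in>pairs_over T U. lc_minor a (card (fst p)) (card (snd p)))
       = mono_coeff a (card T) (card U)"
proof -
  have "inj_on (\<lambda>K. (T \<union> K, T \<union> (U - K))) (Pow U)"
    using assms(3) by (intro inj_onI) (auto simp: prod_eq_iff)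
  then have "(\<Sum>p\<in>pairs_over T U. lc_minor a (card (fst p)) (card (snd p)))
      = (\<Sum>K\<in>Pow U. lc_minor a (card (T \<union> K)) (card (T \<union> (U - K))))"
    unfolding pairs_over_def by (simp add: sum.reindex)
  also have "\<dots> = (\<Sum>K\<in>Pow U. lc_minor a (card T + card K) (card T + card U - card K))"
  proof (rule sum.cong[OF refl])
    fix K assume "K \<in> Pow U"
    then have K: "finite K" "K \<subseteq> U" using assms finite_subset by auto
    have "card (T \<union> K) = card T + card K" using K assms by (intro card_Un_disjoint) auto
    moreover have "card (T \<union> (U - K)) = card T + (card U - card K)"
      using K assms by (subst card_Un_disjoint) (auto simp: card_Diff_subset)
    moreover have "card K \<le> card U" using K assms by (simp add: card_mono)
    ultimately show "lc_minor a (card (T \<union> K)) (card (T \<union> (U - K)))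
        = lc_minor a (card T + card K) (card T + card U - card K)"
      by simp
  qed
  also have "\<dots> = mono_coeff a (card T) (card U)"
    unfolding mono_coeff_def by (rule sum_Pow_by_card[OF assms(2)])
  finally show ?thesis .
qed

lemma mono_coeff_nonneg:
  assumes "\<And>i j. i \<le> j \<Longrightarrow> j \<le> t + u \<Longrightarrow> 0 \<le> lc_minor a i j"
  shows "0 \<le> mono_coeff a t u"
proof -
  define T where "T = {0..<t}"
  define U where "U = {t..<t+u}"
  have TU: "finite T" "finite U" "T \<inter> U = {}" "card T = t" "card U = u"
    unfolding T_def U_def by auto
  then have "card (T \<union> U) = t + u" by (simp add: card_Un_disjoint)
  have fin: "finite (pairs_over T U)" unfolding pairs_over_def using TU by simp
  have mem: "finite (fst p) \<and> finite (snd p) \<and> card (snd p) \<le> t + u" if "p \<in> pairs_over T U" for p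
    using that TU \<open>card (T \<union> U) = t + u\<close> card_mono[of "T \<union> U" "snd p"]
    unfolding pairs_over_iff[OF TU(3)]
    by (metis Un_upper2 finite_Un)
  have "mono_coeff a t u = (\<Sum>p\<in>pairs_over T U. lc_minor a (card (fst p)) (card (snd p)) * 1)"
    using sum_lc_minor_pairs_over[OF TU(1-3), of a] TU by simp
  also have "\<dots> = (\<Sum>p\<in>{p\<in>pairs_over T U. dominated (fst p) (snd p)}.
      lc_minor a (card (fst p)) (card (snd p)) * 1)"
  proof (rule sum_lc_minor_eq_dominated_part[OF fin])
    fix p assume "p \<in> pairs_over T U"
    then show "finite (fst p) \<and> finite (snd p)" "swap_tails p \<in> pairs_over T U"
      using mem swap_tails_Un_Int[of "fst p" "snd p"] unfolding pairs_over_iff[OF TU(3)] by simp_all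
  qed simp
  also have "\<dots> \<ge> 0"
    using mem dominated_card_le assms by (intro sum_nonneg) auto
  finally show ?thesis .
qed

definition disjoint_pairs :: "nat set \<Rightarrow> (nat set \<times> nat set) set" where
  "disjoint_pairs V = {q. fst q \<subseteq> V \<and> snd q \<subseteq> V \<and> fst q \<inter> snd q = {}}"

abbreviation mono_weight :: "(nat \<Rightarrow> real) \<Rightarrow> nat set \<times> nat set \<Rightarrow> real" where
  "mono_weight y q \<equiv> (\<Prod>i\<in>fst q. (y i)\<^sup>2) * (\<Prod>i\<in>snd q. y i)"

lemma finite_disjoint_pairs: "finite V \<Longrightarrow> finite (disjoint_pairs V)"
  by (rule finite_subset[of _ "Pow V \<times> Pow V"]) (auto simp: disjoint_pairs_def)
lemma pair_weight_pairs_over: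
  assumes "finite T" "finite U" "T \<inter> U = {}" "p \<in> pairs_over T U"
  shows "pair_weight y p = mono_weight y (T, U)"
proof -
  have p: "fst p \<union> snd p = T \<union> U" "fst p \<inter> snd p = T"
    using assms(3,4) pairs_over_iff by auto
  then have "finite (fst p)" "finite (snd p)" using assms(1,2) by (metis finite_Un)+
  then have "pair_weight y p = prod y (T \<union> U) * prod y T"
    using prod.union_inter[of "fst p" "snd p" y] p by simp
  also have "\<dots> = mono_weight y (T, U)"
    using assms(1-3) by (simp add: prod.union_disjoint power2_eq_square prod.distrib)
  finally show ?thesis .
qed

lemma Delta_on_disjoint_pair_expansion:
  assumes "finite V"
  shows "Delta_on a V y
       = (\<Sum>q\<in>disjoint_pairs V. mono_coeff a (card (fst q)) (card (snd q)) * mono_weight y q)"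
proof -
  define key where "key p = (fst p \<inter> snd p, (fst p \<union> snd p) - (fst p \<inter> snd p))"
    for p :: "nat set \<times> nat set"
  have "Delta_on a V y = (\<Sum>q\<in>disjoint_pairs V. \<Sum>p\<in>{p. p \<in> Pow V \<times> Pow V \<and> key p = q}.
      lc_minor a (card (fst p)) (card (snd p)) * pair_weight y p)"
    unfolding Delta_on_pair_expansion
    by (rule sum.group[symmetric])
       (use assms finite_disjoint_pairs in \<open>auto simp: key_def disjoint_pairs_def\<close>)
  also have "\<dots>
      = (\<Sum>q\<in>disjoint_pairs V. mono_coeff a (card (fst q)) (card (snd q)) * mono_weight y q)"
  proof (rule sum.cong[OF refl])
    fix q assume q: "q \<in> disjoint_pairs V"
    obtain T U where qTU: "q = (T, U)" by fastforce
    have TU: "T \<subseteq> V" "U \<subseteq> V" "T \<inter> U = {}" using q qTU unfolding disjoint_pairs_def by auto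
    have fin: "finite T" "finite U" using TU assms by (auto intro: finite_subset)
    have fiber: "{p. p \<in> Pow V \<times> Pow V \<and> key p = q} = pairs_over T U"
      unfolding pairs_over_iff[OF TU(3)] set_eq_iff key_def qTU
      using TU by (auto simp: mem_Times_iff)
    have "pair_weight y p = mono_weight y q" if "p \<in> pairs_over T U" for p
      using pair_weight_pairs_over[OF fin TU(3) that] qTU by simp
    then show "(\<Sum>p\<in>{p. p \<in> Pow V \<times> Pow V \<and> key p = q}.
        lc_minor a (card (fst p)) (card (snd p)) * pair_weight y p)
        = mono_coeff a (card (fst q)) (card (snd q)) * mono_weight y q"
      unfolding fiber using sum_lc_minor_pairs_over[OF fin TU(3), of a] qTU
      by (simp flip: sum_distrib_right)
  qed
  finally show ?thesis .
qed

definition pair_exponent :: "nat set \<times> nat set \<Rightarrow> nat \<Rightarrow> nat" where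
  "pair_exponent q i = (if i \<in> fst q then 2 else if i \<in> snd q then 1 else 0)"

lemma prod_pair_exponent:
  assumes "finite V" "q \<in> disjoint_pairs V"
  shows "(\<Prod>i\<in>V. y i ^ pair_exponent q i) = mono_weight y q"
proof -
  have q: "fst q \<subseteq> V" "snd q \<subseteq> V" "fst q \<inter> snd q = {}"
    using assms(2) unfolding disjoint_pairs_def by auto
  have "(\<Prod>i\<in>V. y i ^ pair_exponent q i) = (\<Prod>i\<in>fst q \<union> snd q. y i ^ pair_exponent q i)"
    by (rule prod.mono_neutral_right) (use assms(1) q in \<open>auto simp: pair_exponent_def\<close>)
  also have "\<dots> = (\<Prod>i\<in>fst q. y i ^ pair_exponent q i) * (\<Prod>i\<in>snd q. y i ^ pair_exponent q i)"
    using assms(1) q by (intro prod.union_disjoint) (auto intro: finite_subset)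
  also have "\<dots> = mono_weight y q"
    using q by (auto simp: pair_exponent_def intro!: arg_cong2[where f = "(*)"] prod.cong)
  finally show ?thesis .
qed

lemma card_pair_exponent_levels:
  assumes "finite V" "q \<in> disjoint_pairs V"
  shows "card {i\<in>V. pair_exponent q i = v}
    = (if v = 2 then card (fst q) else 0) + (if v = 1 then card (snd q) else 0)
      + (if v = 0 then card V - (card (fst q) + card (snd q)) else 0)"
proof -
  have q: "fst q \<subseteq> V" "snd q \<subseteq> V" "fst q \<inter> snd q = {}"
    using assms(2) unfolding disjoint_pairs_def by auto
  have levels: "{i\<in>V. pair_exponent q i = 0} = V - (fst q \<union> snd q)"
    "{i\<in>V. pair_exponent q i = 1} = snd q" "{i\<in>V. pair_exponent q i = 2} = fst q"
    using q by (auto simp: pair_exponent_def)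
  have other: "card {i\<in>V. pair_exponent q i = v} = 0" if "v \<notin> {0, 1, 2}"
    using that by (auto simp: pair_exponent_def)
  have "card (V - (fst q \<union> snd q)) = card V - (card (fst q) + card (snd q))"
    using q assms(1) by (simp add: card_Diff_subset card_Un_disjoint finite_subset)
  then show ?thesis
    using levels other by (cases "v \<in> {0, 1, 2}") auto
qed

lemma exponents_two_col_iff:
  assumes "finite V"
  shows "image_mset alpha (mset_set V)
         = mset (two_col t u) + replicate_mset (card V - length (two_col t u)) 0
     \<longleftrightarrow> (\<forall>v. card {i\<in>V. alpha i = v} = (if v = 2 then t else 0) + (if v = 1 then u else 0)
            + (if v = 0 then card V - (t + u) else 0))"
  unfolding multiset_eq_iff count_image_mset_eq_card_vimage[OF assms] count_union
    mset_two_col two_col_count(3) by (auto simp: vimage_def Int_def conj_commute)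

lemma monomial_sym_two_col:
  assumes "finite V" "t + u \<le> card V"
  shows "monomial_sym (two_col t u) V y
       = (\<Sum>q\<in>{q\<in>disjoint_pairs V. card (fst q) = t \<and> card (snd q) = u}. mono_weight y q)"
proof -
  define A where "A = {alpha :: nat \<Rightarrow> nat. (\<forall>i. i \<notin> V \<longrightarrow> alpha i = 0) \<and>
    (\<forall>v. card {i\<in>V. alpha i = v} = (if v = 2 then t else 0) + (if v = 1 then u else 0)
      + (if v = 0 then card V - (t + u) else 0))}"
  define levels where "levels alpha = ({i\<in>V. alpha i = 2}, {i\<in>V. alpha i = 1})"
    for alpha :: "nat \<Rightarrow> nat"
  have "monomial_sym (two_col t u) V y = (\<Sum>alpha\<in>A. \<Prod>i\<in>V. y i ^ alpha i)"
    unfolding monomial_sym_def exponents_two_col_iff[OF assms(1)] A_def ..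
  also have "\<dots> = (\<Sum>q\<in>{q\<in>disjoint_pairs V. card (fst q) = t \<and> card (snd q) = u}. mono_weight y q)"
  proof (rule sum.reindex_bij_witness[where i = pair_exponent and j = levels])
    fix alpha assume "alpha \<in> A"
    then have off: "\<And>i. i \<notin> V \<Longrightarrow> alpha i = 0"
      and level: "\<And>v. card {i\<in>V. alpha i = v} = (if v = 2 then t else 0) + (if v = 1 then u else 0)
        + (if v = 0 then card V - (t + u) else 0)"
      unfolding A_def by auto
    have "alpha i \<in> {0, 1, 2}" for i
    proof (cases "i \<in> V")
      case True
      then have "card {j\<in>V. alpha j = alpha i} \<noteq> 0" using assms(1) by auto
      then show ?thesis using level[of "alpha i"] by (auto split: if_splits)
    qed (simp add: off)
    then show inverse: "pair_exponent (levels alpha) = alpha"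
      using off by (auto simp: pair_exponent_def levels_def fun_eq_iff)
    show pair: "levels alpha \<in> {q\<in>disjoint_pairs V. card (fst q) = t \<and> card (snd q) = u}"
      using level[of 2] level[of 1] unfolding disjoint_pairs_def levels_def by auto
    show "mono_weight y (levels alpha) = (\<Prod>i\<in>V. y i ^ alpha i)"
      using prod_pair_exponent[OF assms(1), of "levels alpha" y] pair inverse by simp
  next
    fix q assume q: "q \<in> {q\<in>disjoint_pairs V. card (fst q) = t \<and> card (snd q) = u}"
    then have sub: "fst q \<subseteq> V" "snd q \<subseteq> V" "fst q \<inter> snd q = {}"
      unfolding disjoint_pairs_def by auto
    then show "levels (pair_exponent q) = q"
      by (auto simp: pair_exponent_def levels_def prod_eq_iff)
    show "pair_exponent q \<in> A"
      unfolding A_def using card_pair_exponent_levels[OF assms(1)] q sub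
      by (auto simp: pair_exponent_def)
  qed
  finally show ?thesis .
qed

lemma Delta_on_monomial_expansion:
  assumes "finite V"
  shows "Delta_on a V y = (\<Sum>tu\<in>{tu. fst tu + snd tu \<le> card V}.
    mono_coeff a (fst tu) (snd tu) * monomial_sym (two_col (fst tu) (snd tu)) V y)"
proof -
  define N where "N = {tu :: nat \<times> nat. fst tu + snd tu \<le> card V}"
  have "Delta_on a V y = (\<Sum>tu\<in>N. mono_coeff a (fst tu) (snd tu) *
    (\<Sum>q\<in>{q\<in>disjoint_pairs V. card (fst q) = fst tu \<and> card (snd q) = snd tu}. mono_weight y q))"
    unfolding Delta_on_disjoint_pair_expansion[OF assms]
  proof (rule sum_group_by_cards)
    show "finite N" unfolding N_def by (rule finite_subset[of _ "{..card V} \<times> {..card V}"]) auto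
    fix q assume "q \<in> disjoint_pairs V"
    then have q: "fst q \<union> snd q \<subseteq> V" "fst q \<inter> snd q = {}" unfolding disjoint_pairs_def by auto
    then have "card (fst q) + card (snd q) \<le> card V"
      using assms by (metis card_Un_disjoint card_mono finite_Un finite_subset)
    then show "(card (fst q), card (snd q)) \<in> N" unfolding N_def by simp
  qed (use assms finite_disjoint_pairs in simp)
  then show ?thesis unfolding N_def by (simp add: monomial_sym_two_col[OF assms])
qed

lemma pos_combI:
  fixes f :: "'x \<Rightarrow> real"
  assumes "finite A" "\<And>x. x \<in> A \<Longrightarrow> 0 \<le> f x" "inj_on \<phi> A" "\<And>x. x \<in> A \<Longrightarrow> is_partition (\<phi> x)"
    and "\<And>y. g y = (\<Sum>x\<in>A. f x * b (\<phi> x) y)"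
  shows "pos_comb b g"
proof -
  define A' where "A' = {x\<in>A. 0 < f x}"
  define c where "c lam = f (the_inv_into A \<phi> lam)" for lam
  have A': "A' \<subseteq> A" "inj_on \<phi> A'" unfolding A'_def using assms(3) by (auto intro: inj_on_subset)
  have c: "c (\<phi> x) = f x" if "x \<in> A" for x
    unfolding c_def using the_inv_into_f_f[OF assms(3) that] by simp
  have "g y = (\<Sum>lam\<in>\<phi> ` A'. c lam * b lam y)" for y
  proof -
    have "g y = (\<Sum>x\<in>A'. f x * b (\<phi> x) y)"
      unfolding assms(5) using assms(1,2) A'(1)
      by (intro sum.mono_neutral_right) (auto simp: A'_def less_le)
    also have "\<dots> = (\<Sum>lam\<in>\<phi> ` A'. c lam * b lam y)"
      using A' c by (simp add: sum.reindex subset_iff)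
    finally show ?thesis .
  qed
  moreover have "finite (\<phi> ` A')" using assms(1) A'(1) by (auto intro: finite_subset)
  moreover have "is_partition lam \<and> 0 < c lam" if "lam \<in> \<phi> ` A'" for lam
    using that assms(4) c A'(1) unfolding A'_def by auto
  ultimately show ?thesis unfolding pos_comb_def by blast
qed

lemma pos_comb_imp_Delta_nonneg:
  assumes "pos_comb b (Delta_on a V)" "\<And>lam y. \<forall>c\<in>V. 0 < y c \<Longrightarrow> 0 \<le> b lam y"
  shows "Delta_nonneg a V"
  using assms unfolding pos_comb_def Delta_nonneg_def
  by (metis (no_types, lifting) less_imp_le mult_nonneg_nonneg sum_nonneg)

lemma schur_nonneg:
  assumes "\<forall>c\<in>V. 0 < y c"
  shows "0 \<le> schur lam V y"
  unfolding schur_def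
proof (intro sum_nonneg prod_nonneg)
  fix T x assume "T \<in> ssyt lam V" "x \<in> young_cells lam"
  then have "T x \<in> V" unfolding ssyt_def by blast
  then show "0 \<le> y (T x)" using assms by (simp add: less_imp_le)
qed

lemma monomial_sym_nonneg:
  assumes "\<forall>c\<in>V. 0 < y c"
  shows "0 \<le> monomial_sym lam V y"
  unfolding monomial_sym_def using assms by (intro sum_nonneg prod_nonneg) (simp add: less_imp_le)

lemma pos_comb_schur_Delta_on:
  assumes "finite V" "\<And>i j. i \<le> j \<Longrightarrow> j \<le> card V \<Longrightarrow> 0 \<le> lc_minor a i j"
  shows "pos_comb (\<lambda>lam. schur lam V) (Delta_on a V)"
proof (rule pos_combI)
  let ?A = "{lp :: nat \<times> nat. fst lp \<le> snd lp \<and> snd lp \<le> card V}"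
  show "finite ?A" by (rule finite_subset[of _ "{..card V} \<times> {..card V}"]) auto
  show "inj_on (\<lambda>lp. two_col (fst lp) (snd lp - fst lp)) ?A"
    by (rule inj_onI)
       (metis (mono_tags, lifting) two_col_count(1,2) le_add_diff_inverse mem_Collect_eq
         prod_eq_iff)
qed (use assms Delta_on_schur_expansion two_col_is_partition in auto)

lemma pos_comb_monomial_Delta_on:
  assumes "finite V" "\<And>i j. i \<le> j \<Longrightarrow> j \<le> card V \<Longrightarrow> 0 \<le> lc_minor a i j"
  shows "pos_comb (\<lambda>lam. monomial_sym lam V) (Delta_on a V)"
proof (rule pos_combI)
  let ?A = "{tu :: nat \<times> nat. fst tu + snd tu \<le> card V}"
  show "finite ?A" by (rule finite_subset[of _ "{..card V} \<times> {..card V}"]) auto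
  show "inj_on (\<lambda>tu. two_col (fst tu) (snd tu)) ?A"
    by (rule inj_onI) (metis two_col_count(1,2) prod_eq_iff)
  show "0 \<le> mono_coeff a (fst tu) (snd tu)" if "tu \<in> ?A" for tu
    using that assms(2) by (intro mono_coeff_nonneg) auto
qed (use assms Delta_on_monomial_expansion two_col_is_partition in auto)

theorem proposition3p6:
  fixes m :: nat and a :: "nat \<Rightarrow> real"
  assumes "m \<ge> 2"
    and "\<forall>k\<le>m. a k \<ge> 0"
    and "\<exists>k\<le>m. a k \<noteq> 0"
  shows "(rayleigh m (Zpoly m a) \<longleftrightarrow> log_concave m a \<and> no_internal_zeros m a)
       \<and> (log_concave m a \<and> no_internal_zeros m a
            \<longleftrightarrow> pos_comb (\<lambda>lam. schur lam {3..m}) (DeltaZ (Zpoly m a) 1 2))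
       \<and> (pos_comb (\<lambda>lam. schur lam {3..m}) (DeltaZ (Zpoly m a) 1 2)
            \<longleftrightarrow> pos_comb (\<lambda>lam. monomial_sym lam {3..m}) (DeltaZ (Zpoly m a) 1 2))"
proof -
  let ?V = "{3..m}"
  have V: "finite ?V" "card ?V + 2 = m" using assms(1) by auto
  have from_Delta: "log_concave m a \<and> no_internal_zeros m a" if "Delta_nonneg a ?V"
    using Delta_nonneg_imp_log_concave[OF V that]
      Delta_nonneg_imp_no_internal_zeros[OF V that assms(2)] by blast
  have minors: "0 \<le> lc_minor a i j"
    if "log_concave m a \<and> no_internal_zeros m a" "i \<le> j" "j \<le> card ?V" for i j
    using lc_minor_nonneg[OF assms(2)] that V(2) by auto
  have "pos_comb (\<lambda>lam. schur lam ?V) (Delta_on a ?V)"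
    and "pos_comb (\<lambda>lam. monomial_sym lam ?V) (Delta_on a ?V)"
    if "log_concave m a \<and> no_internal_zeros m a"
    using pos_comb_schur_Delta_on[OF V(1) minors[OF that]]
      pos_comb_monomial_Delta_on[OF V(1) minors[OF that]] by auto
  moreover have "Delta_nonneg a ?V" if "pos_comb (\<lambda>lam. schur lam ?V) (Delta_on a ?V)"
    using pos_comb_imp_Delta_nonneg[OF that schur_nonneg] .
  moreover have "Delta_nonneg a ?V" if "pos_comb (\<lambda>lam. monomial_sym lam ?V) (Delta_on a ?V)"
    using pos_comb_imp_Delta_nonneg[OF that monomial_sym_nonneg] .
  ultimately show ?thesis
    unfolding DeltaZ_12_eq_Delta_on[OF assms(1)] rayleigh_iff_Delta_nonneg[OF assms(1)]
    using from_Delta by blast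
qed

end
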